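(* (1) $Q^{1}_{\mathrm{Mon}}\mathrm{FO}(+,\times)\equiv Q^{\star}_{\mathrm{Mon}}\mathrm{FO}(+,\times)$. (2) $\mathrm{SOM}(Q^{1}_{\mathrm{Mon}},+,\times)\equiv\mathrm{SOM}(Q^{\star}_{\mathrm{Mon}},+,\times)$.
   Context: Strings as structures: a nonempty string $b_0\cdots b_{n-1}$ over the ordered alphabet $(a_1,\dots,a_s)$ is the structure with universe $\{0,\dots,n-1\}$, natural order $<$, and unary predicates $P_{a_i}=\{j:b_j=a_i\}$. FO uses $=$, $<$, these predicates, $\min,\max$, connectives, $\exists,\forall$; SOM adds unary second-order variables and quantifiers. "$+,\times$" means the ternary relations $i+j=k$ and $i\cdot j=k$ are additionally built in. Monadic second-order Lindström quantifiers: for a language $L$ over $(a_1,\dots,a_s)$ and distinct unary variables $\overline X=(X_1,\dots,X_k)$, over universe $\{0,\dots,n-1\}$ and an assignment $(A_1,\dots,A_k)$ let $s^i_j=1$ iff $j\in A_i$. For $Q^1_L$ the $2^{nk}$ assignments are ordered lexicographically by the interleaved code $s^1_0\cdots s^k_0s^1_1\cdots s^k_1\cdots s^1_{n-1}\cdots s^k_{n-1}$; for $Q^\star_L$ by the concatenated code $s^1_0\cdots s^1_{n-1}\cdots s^k_0\cdots s^k_{n-1}$. Then $\mathcal A\models Q\overline X[\varphi_1,\dots,\varphi_{s-1}]$ iff the word of length $2^{nk}$ whose $i$-th letter is $a_j$ for the least $j$ with $\varphi_j$ true at the $i$-th assignment (and $a_s$ if none) lies in $L$. A monoid is a finite set $M$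 with an associative binary operation with identity; for $S\subseteq M$, the word-problem $\mathcal W(S,M)$ is the set of words over alphabet $M$ whose product lies in $S$. $Q^{1}_{\mathrm{Mon}}\mathrm{FO}(+,\times)$ (resp. $Q^{\star}_{\mathrm{Mon}}\mathrm{FO}(+,\times)$) consists of formulas $Q^1_L\overline X[\varphi_1,\dots,\varphi_{s-1}]$ (resp. with $Q^\star_L$), $L$ a monoid word-problem, $\varphi_i$ first-order with built-in $+,\times$. $\mathrm{SOM}(Q^{1}_{\mathrm{Mon}},+,\times)$ (resp. with $\star$) is SOM with built-in $+,\times$ closed under nested application of $Q^1_L$ (resp. $Q^\star_L$) for monoid word-problems $L$. $\mathcal L\equiv\mathcal L'$ means that over every string signature every sentence of either logic has an equivalent sentence of the other. *)

theory Defs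
  imports Main
begin

text \<open>Strings over the ordered alphabet (a_1,...,a_s) are lists of naturals < s,
 letter a_i being encoded as i-1. First-order variables and unary second-order
 variables are natural numbers.\<close>

datatype tm = Var nat | Min | Max

datatype qkind = Interleaved | Concatenated

datatype fm =
    Eq tm tm
  | Less tm tm
  | Pred nat tm
  | Plus tm tm tm
  | Times tm tm tm
  | SOAtom nat tm
  | Neg fm
  | Conj fm fm
  | Disj fm fm
  | Ex nat fm
  | All nat fm
  | ExS nat fm
  | AllS nat fm
  | LQ qkind nat "nat list \<Rightarrow> bool" "nat list" "fm list"
    \<comment> \<open>LQ q m L Xs phis: Lindstroem quantifier Q^q_L Xs [phis], L a language over
        the ordered alphabet 0,...,m-1\<close>

fun tval :: "nat list \<Rightarrow> (nat \<Rightarrow> nat) \<Rightarrow> tm \<Rightarrow> nat" where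
  "tval w I (Var x) = I x"
| "tval w I Min = 0"
| "tval w I Max = length w - 1"

text \<open>bit number p (0 = most significant) of the length-N binary code of i\<close>
definition codebit :: "nat \<Rightarrow> nat \<Rightarrow> nat \<Rightarrow> bool" where
  "codebit N i p = odd (i div 2 ^ (N - 1 - p))"

text \<open>The value A_{t+1} (t < k) of the i-th assignment (0-based, lexicographic order of codes)
 over universe {0..<n} with k set variables.\<close>
fun asg :: "qkind \<Rightarrow> nat \<Rightarrow> nat \<Rightarrow> nat \<Rightarrow> nat \<Rightarrow> nat set" where
  "asg Interleaved n k i t = {j. j < n \<and> codebit (n*k) i (j*k + t)}"
| "asg Concatenated n k i t = {j. j < n \<and> codebit (n*k) i (t*n + j)}"

definition upd_list :: "(nat \<Rightarrow> nat set) \<Rightarrow> nat list \<Rightarrow> nat set list \<Rightarrow> (nat \<Rightarrow> nat set)" where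
  "upd_list J Xs As = fold (\<lambda>(X, A) J. J(X := A)) (zip Xs As) J"

text \<open>letter determined by truth values of phi_1,...,phi_{m-1} (0-based letters)\<close>
definition letter_of :: "bool list \<Rightarrow> nat \<Rightarrow> nat" where
  "letter_of bs m = (if \<exists>j < length bs. bs ! j then (LEAST j. j < length bs \<and> bs ! j) else m - 1)"

fun sat :: "nat list \<Rightarrow> (nat \<Rightarrow> nat) \<Rightarrow> (nat \<Rightarrow> nat set) \<Rightarrow> fm \<Rightarrow> bool" where
  "sat w I J (Eq t1 t2) = (tval w I t1 = tval w I t2)"
| "sat w I J (Less t1 t2) = (tval w I t1 < tval w I t2)"
| "sat w I J (Pred a t) = (tval w I t < length w \<and> w ! tval w I t = a)"
| "sat w I J (Plus t1 t2 t3) = (tval w I t1 + tval w I t2 = tval w I t3)"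
| "sat w I J (Times t1 t2 t3) = (tval w I t1 * tval w I t2 = tval w I t3)"
| "sat w I J (SOAtom X t) = (tval w I t \<in> J X)"
| "sat w I J (Neg \<phi>) = (\<not> sat w I J \<phi>)"
| "sat w I J (Conj \<phi> \<psi>) = (sat w I J \<phi> \<and> sat w I J \<psi>)"
| "sat w I J (Disj \<phi> \<psi>) = (sat w I J \<phi> \<or> sat w I J \<psi>)"
| "sat w I J (Ex x \<phi>) = (\<exists>a < length w. sat w (I(x := a)) J \<phi>)"
| "sat w I J (All x \<phi>) = (\<forall>a < length w. sat w (I(x := a)) J \<phi>)"
| "sat w I J (ExS X \<phi>) = (\<exists>A \<subseteq> {0..<length w}. sat w I (J(X := A)) \<phi>)"
| "sat w I J (AllS X \<phi>) = (\<forall>A \<subseteq> {0..<length w}. sat w I (J(X := A)) \<phi>)"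
| "sat w I J (LQ q m L Xs \<phi>s) =
     L (map (\<lambda>i. letter_of
          (map (\<lambda>\<phi>. sat w I (upd_list J Xs (map (asg q (length w) (length Xs) i) [0..<length Xs])) \<phi>) \<phi>s) m)
        [0..<2 ^ (length w * length Xs)])"

fun tfv :: "tm \<Rightarrow> nat set" where
  "tfv (Var x) = {x}"
| "tfv Min = {}"
| "tfv Max = {}"

fun fv :: "fm \<Rightarrow> nat set" where
  "fv (Eq t1 t2) = tfv t1 \<union> tfv t2"
| "fv (Less t1 t2) = tfv t1 \<union> tfv t2"
| "fv (Pred a t) = tfv t"
| "fv (Plus t1 t2 t3) = tfv t1 \<union> tfv t2 \<union> tfv t3"
| "fv (Times t1 t2 t3) = tfv t1 \<union> tfv t2 \<union> tfv t3"
| "fv (SOAtom X t) = tfv t"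
| "fv (Neg \<phi>) = fv \<phi>"
| "fv (Conj \<phi> \<psi>) = fv \<phi> \<union> fv \<psi>"
| "fv (Disj \<phi> \<psi>) = fv \<phi> \<union> fv \<psi>"
| "fv (Ex x \<phi>) = fv \<phi> - {x}"
| "fv (All x \<phi>) = fv \<phi> - {x}"
| "fv (ExS X \<phi>) = fv \<phi>"
| "fv (AllS X \<phi>) = fv \<phi>"
| "fv (LQ q m L Xs \<phi>s) = (\<Union>\<phi>\<in>set \<phi>s. fv \<phi>)"

fun fsv :: "fm \<Rightarrow> nat set" where
  "fsv (SOAtom X t) = {X}"
| "fsv (Neg \<phi>) = fsv \<phi>"
| "fsv (Conj \<phi> \<psi>) = fsv \<phi> \<union> fsv \<psi>"
| "fsv (Disj \<phi> \<psi>) = fsv \<phi> \<union> fsv \<psi>"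
| "fsv (Ex x \<phi>) = fsv \<phi>"
| "fsv (All x \<phi>) = fsv \<phi>"
| "fsv (ExS X \<phi>) = fsv \<phi> - {X}"
| "fsv (AllS X \<phi>) = fsv \<phi> - {X}"
| "fsv (LQ q m L Xs \<phi>s) = (\<Union>\<phi>\<in>set \<phi>s. fsv \<phi>) - set Xs"
| "fsv _ = {}"

definition sentence :: "fm \<Rightarrow> bool" where
  "sentence \<phi> \<longleftrightarrow> fv \<phi> = {} \<and> fsv \<phi> = {}"

text \<open>A finite monoid with alphabet ordering is w.l.o.g. carried by {0..<m} (element j = the
 (j+1)-st letter).  L is the word problem W(S,M) on words over {0..<m}.\<close>
definition monoid_wp :: "nat \<Rightarrow> (nat list \<Rightarrow> bool) \<Rightarrow> bool" where
  "monoid_wp m L \<longleftrightarrow> (\<exists>mult e S.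
     e < m \<and> S \<subseteq> {0..<m} \<and>
     (\<forall>x<m. \<forall>y<m. mult x y < m) \<and>
     (\<forall>x<m. \<forall>y<m. \<forall>z<m. mult (mult x y) z = mult x (mult y z)) \<and>
     (\<forall>x<m. mult e x = x \<and> mult x e = x) \<and>
     (\<forall>u. set u \<subseteq> {0..<m} \<longrightarrow> (L u \<longleftrightarrow> foldl mult e u \<in> S)))"

fun atoms_ok :: "nat \<Rightarrow> fm \<Rightarrow> bool" where
  "atoms_ok s (Pred a t) = (a < s)"
| "atoms_ok s _ = True"

text \<open>first-order formulas with built-in +,x (may mention set variables as atoms)\<close>
fun is_FO :: "nat \<Rightarrow> fm \<Rightarrow> bool" where
  "is_FO s (Neg \<phi>) = is_FO s \<phi>"
| "is_FO s (Conj \<phi> \<psi>) = (is_FO s \<phi> \<and> is_FO s \<psi>)"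
| "is_FO s (Disj \<phi> \<psi>) = (is_FO s \<phi> \<and> is_FO s \<psi>)"
| "is_FO s (Ex x \<phi>) = is_FO s \<phi>"
| "is_FO s (All x \<phi>) = is_FO s \<phi>"
| "is_FO s (ExS X \<phi>) = False"
| "is_FO s (AllS X \<phi>) = False"
| "is_FO s (LQ q m L Xs \<phi>s) = False"
| "is_FO s \<phi> = atoms_ok s \<phi>"

definition good_mon_quant :: "nat \<Rightarrow> (nat list \<Rightarrow> bool) \<Rightarrow> nat list \<Rightarrow> fm list \<Rightarrow> bool" where
  "good_mon_quant m L Xs \<phi>s \<longleftrightarrow> 1 \<le> m \<and> monoid_wp m L \<and> length \<phi>s = m - 1 \<and> distinct Xs \<and> Xs \<noteq> []"

fun QMonFO :: "qkind \<Rightarrow> nat \<Rightarrow> fm \<Rightarrow> bool" where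
  "QMonFO q s (LQ q' m L Xs \<phi>s) =
     (q' = q \<and> good_mon_quant m L Xs \<phi>s \<and> (\<forall>\<phi>\<in>set \<phi>s. is_FO s \<phi>))"
| "QMonFO q s _ = False"

fun SOMQ :: "qkind \<Rightarrow> nat \<Rightarrow> fm \<Rightarrow> bool" where
  "SOMQ q s (Neg \<phi>) = SOMQ q s \<phi>"
| "SOMQ q s (Conj \<phi> \<psi>) = (SOMQ q s \<phi> \<and> SOMQ q s \<psi>)"
| "SOMQ q s (Disj \<phi> \<psi>) = (SOMQ q s \<phi> \<and> SOMQ q s \<psi>)"
| "SOMQ q s (Ex x \<phi>) = SOMQ q s \<phi>"
| "SOMQ q s (All x \<phi>) = SOMQ q s \<phi>"
| "SOMQ q s (ExS X \<phi>) = SOMQ q s \<phi>"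
| "SOMQ q s (AllS X \<phi>) = SOMQ q s \<phi>"
| "SOMQ q s (LQ q' m L Xs \<phi>s) =
     (q' = q \<and> good_mon_quant m L Xs \<phi>s \<and> (\<forall>\<phi>\<in>set \<phi>s. SOMQ q s \<phi>))"
| "SOMQ q s \<phi> = atoms_ok s \<phi>"

definition models :: "nat list \<Rightarrow> fm \<Rightarrow> bool" where
  "models w \<phi> = sat w (\<lambda>_. 0) (\<lambda>_. {}) \<phi>"

definition equivalent_on :: "nat \<Rightarrow> fm \<Rightarrow> fm \<Rightarrow> bool" where
  "equivalent_on s \<phi> \<psi> \<longleftrightarrow>
     (\<forall>w. w \<noteq> [] \<and> set w \<subseteq> {0..<s} \<longrightarrow> (models w \<phi> \<longleftrightarrow> models w \<psi>))"

definition logic_equiv :: "(nat \<Rightarrow> fm \<Rightarrow> bool) \<Rightarrow> (nat \<Rightarrow> fm \<Rightarrow> bool) \<Rightarrow> bool" where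
  "logic_equiv \<L>1 \<L>2 \<longleftrightarrow> (\<forall>s \<ge> 1.
     (\<forall>\<phi>. \<L>1 s \<phi> \<and> sentence \<phi> \<longrightarrow> (\<exists>\<psi>. \<L>2 s \<psi> \<and> sentence \<psi> \<and> equivalent_on s \<phi> \<psi>)) \<and>
     (\<forall>\<psi>. \<L>2 s \<psi> \<and> sentence \<psi> \<longrightarrow> (\<exists>\<phi>. \<L>1 s \<phi> \<and> sentence \<phi> \<and> equivalent_on s \<phi> \<psi>)))"

end

theory Submission
  imports Defs
begin

text \<open>The \<open>i\<close>-th assignment in the interleaved order and the \<open>i\<close>-th assignment in the
  concatenated order have the same code; only the position of the bit recording \<open>j \<in> X_t\<close>
  differs (\<open>j * k + t\<close> versus \<open>t * n + j\<close>). Hence \<open>Q^1_L Xs [\<phi>s]\<close> is equivalent to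
  \<open>Q^\<star>_L Ys [\<phi>s']\<close> for fresh \<open>Ys\<close>, where \<open>\<phi>s'\<close> replaces each atom \<open>X_t(u)\<close> by the statement
  that some \<open>y \<in> Y_t'\<close> has \<open>u * k + t = t' * n + y\<close>, and symmetrically. Although \<open>k\<close>, \<open>t\<close>,
  \<open>t'\<close> need not be elements of the universe, such an equation is first-order definable from
  \<open>+\<close> by counting the wrap-arounds modulo \<open>n\<close>. Applied to all quantifiers from the inside
  out, the translation preserves both logics.\<close>

lemma upd_list_Cons [simp]: "upd_list J (X # Xs) (A # As) = upd_list (J(X := A)) Xs As"
  by (simp add: upd_list_def)

lemma upd_list_Nil [simp]: "upd_list J [] As = J"
  by (simp add: upd_list_def)

lemma upd_list_notin: "Y \<notin> set Xs \<Longrightarrow> upd_list J Xs As Y = J Y"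
proof (induction Xs arbitrary: J As)
  case (Cons X Xs)
  then show ?case by (cases As) (auto simp: upd_list_def)
qed simp

lemma upd_list_agree:
  "Y \<in> set Xs \<Longrightarrow> length As = length Xs \<Longrightarrow> upd_list J Xs As Y = upd_list J' Xs As Y"
proof (induction Xs arbitrary: J J' As)
  case (Cons X Xs)
  then obtain A As' where "As = A # As'" by (cases As) auto
  with Cons show ?case by (cases "Y \<in> set Xs") (auto simp: upd_list_notin)
qed simp

lemma upd_list_nth:
  "distinct Xs \<Longrightarrow> length As = length Xs \<Longrightarrow> t < length Xs \<Longrightarrow> upd_list J Xs As (Xs ! t) = As ! t"
proof (induction Xs arbitrary: J As t)
  case (Cons X Xs)
  then obtain A As' where "As = A # As'" by (cases As) auto
  with Cons show ?case by (cases t) (auto simp: upd_list_notin)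
qed simp

lemma sat_fsv_cong: "(\<forall>X\<in>fsv \<phi>. J X = J' X) \<Longrightarrow> sat w I J \<phi> = sat w I J' \<phi>"
proof (induction \<phi> arbitrary: I J J')
  case (LQ q m L Xs \<phi>s)
  have "sat w I (upd_list J Xs As) \<phi> = sat w I (upd_list J' Xs As) \<phi>"
    if "\<phi> \<in> set \<phi>s" "length As = length Xs" for As :: "nat set list" and \<phi>
  proof (intro LQ.IH[OF that(1)] ballI)
    fix X assume "X \<in> fsv \<phi>"
    then show "upd_list J Xs As X = upd_list J' Xs As X"
      using that LQ.prems upd_list_agree[OF _ that(2)]
      by (cases "X \<in> set Xs") (auto simp: upd_list_notin)
  qed
  then show ?case by (simp cong: map_cong)
next
  case (Ex x \<phi>)
  have "\<And>a. sat w (I(x := a)) J \<phi> = sat w (I(x := a)) J' \<phi>" using Ex.prems by (intro Ex.IH) simp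
  then show ?case by simp
next
  case (All x \<phi>)
  have "\<And>a. sat w (I(x := a)) J \<phi> = sat w (I(x := a)) J' \<phi>" using All.prems by (intro All.IH) simp
  then show ?case by simp
next
  case (ExS X \<phi>)
  have "\<And>A. sat w I (J(X := A)) \<phi> = sat w I (J'(X := A)) \<phi>" using ExS.prems by (intro ExS.IH) auto
  then show ?case by simp
next
  case (AllS X \<phi>)
  have "\<And>A. sat w I (J(X := A)) \<phi> = sat w I (J'(X := A)) \<phi>" using AllS.prems by (intro AllS.IH) auto
  then show ?case by simp
next
  case (Conj \<phi> \<psi>)
  have "sat w I J \<phi> = sat w I J' \<phi>" "sat w I J \<psi> = sat w I J' \<psi>"
    using Conj.prems by (intro Conj.IH; simp)+
  then show ?case by simp
next
  case (Disj \<phi> \<psi>)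
  have "sat w I J \<phi> = sat w I J' \<phi>" "sat w I J \<psi> = sat w I J' \<psi>"
    using Disj.prems by (intro Disj.IH; simp)+
  then show ?case by simp
qed simp_all

fun var_index :: "tm \<Rightarrow> nat" where
  "var_index (Var x) = x"
| "var_index _ = 0"

lemma var_index_less_fresh: "var_index t < z \<Longrightarrow> z \<notin> tfv t"
  by (cases t) auto

lemma tval_upd_fresh: "z \<notin> tfv t \<Longrightarrow> tval w (I(z := a)) t = tval w I t"
  by (cases t) auto

lemma tval_less_length: "\<forall>x. I x < length w \<Longrightarrow> w \<noteq> [] \<Longrightarrow> tval w I t < length w"
  by (cases t) auto

lemma bounded_fun_upd: "\<forall>x. I x < n \<Longrightarrow> a < n \<Longrightarrow> \<forall>x. (I(z := a)) x < n"
  by simp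

definition false_fm :: fm where
  "false_fm = Neg (Eq Min Min)"

definition succ_fm :: "tm \<Rightarrow> tm \<Rightarrow> fm" where
  "succ_fm a b = (let z = Suc (var_index a + var_index b) in
     Conj (Less a b) (Neg (Ex z (Conj (Less a (Var z)) (Less (Var z) b)))))"

lemma sat_succ_fm:
  assumes "\<forall>x. I x < length w" "w \<noteq> []"
  shows "sat w I J (succ_fm a b) \<longleftrightarrow> tval w I b = tval w I a + 1"
proof -
  let ?z = "Suc (var_index a + var_index b)"
  have "?z \<notin> tfv a" "?z \<notin> tfv b" by (auto intro!: var_index_less_fresh)
  moreover have "tval w I b < length w" using tval_less_length assms .
  ultimately show ?thesis by (auto simp: succ_fm_def Let_def tval_upd_fresh)
qed

text \<open>The witnesses are \<open>d = n - 1 - x\<close> and \<open>e = r + d\<close>, with \<open>z = e + 1\<close>.\<close>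
definition add_wrap_fm :: "tm \<Rightarrow> tm \<Rightarrow> tm \<Rightarrow> fm" where
  "add_wrap_fm z x r = (let d = Suc (var_index z + var_index x + var_index r); e = Suc d in
     Ex d (Conj (Plus x (Var d) Max) (Ex e (Conj (Plus r (Var d) (Var e)) (succ_fm (Var e) z)))))"

lemma sat_add_wrap_fm:
  assumes I: "\<forall>x. I x < length w" and w: "w \<noteq> []"
  shows "sat w I J (add_wrap_fm z x r) \<longleftrightarrow> tval w I z + tval w I x = tval w I r + length w"
proof -
  let ?d = "Suc (var_index z + var_index x + var_index r)"
  let ?e = "Suc ?d"
  let ?n = "length w"
  have fresh: "?d \<notin> tfv z" "?d \<notin> tfv x" "?d \<notin> tfv r" "?e \<notin> tfv z" "?e \<notin> tfv x" "?e \<notin> tfv r"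
    by (auto intro!: var_index_less_fresh)
  have bounds: "tval w I z < ?n" "tval w I x < ?n" using tval_less_length I w by blast+
  have "sat w I J (add_wrap_fm z x r) \<longleftrightarrow> (\<exists>d<?n. tval w I x + d = ?n - 1 \<and>
       (\<exists>e<?n. tval w I r + d = e \<and> tval w I z = e + 1))"
    using I w by (simp add: add_wrap_fm_def Let_def sat_succ_fm bounded_fun_upd tval_upd_fresh fresh
        cong: conj_cong)
  also have "\<dots> \<longleftrightarrow> tval w I z + tval w I x = tval w I r + ?n"
  proof
    assume "tval w I z + tval w I x = tval w I r + ?n"
    then show "\<exists>d<?n. tval w I x + d = ?n - 1 \<and> (\<exists>e<?n. tval w I r + d = e \<and> tval w I z = e + 1)"
      using bounds by (intro exI[of _ "?n - 1 - tval w I x"]) auto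
  qed (use w in auto)
  finally show ?thesis .
qed

lemma add_with_carry_iff:
  fixes n :: nat
  assumes "r < n" "a \<le> n"
  shows "(\<exists>z<n. (V = q * n + z \<and> z + a = r) \<or> (0 < q \<and> V = (q - 1) * n + z \<and> z + a = r + n))
     \<longleftrightarrow> V + a = q * n + r"
proof
  assume "V + a = q * n + r"
  show "\<exists>z<n. (V = q * n + z \<and> z + a = r) \<or> (0 < q \<and> V = (q - 1) * n + z \<and> z + a = r + n)"
  proof (cases "a \<le> r")
    case True
    with \<open>V + a = q * n + r\<close> show ?thesis using assms by (intro exI[of _ "r - a"]) auto
  next
    case False
    with \<open>V + a = q * n + r\<close> obtain q' where "q = Suc q'" by (cases q) auto
    with False \<open>V + a = q * n + r\<close> show ?thesis using assms by (intro exI[of _ "r + n - a"]) auto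
  qed
qed (auto dest!: gr0_implies_Suc)

text \<open>The constants \<open>c, d, q\<close> and the intermediate sums need not lie in the universe
  \<open>{0..<n}\<close>: the sum is built up one summand at a time, counting the wrap-arounds modulo \<open>n\<close>.\<close>
fun affine_fm :: "nat \<Rightarrow> nat \<Rightarrow> nat \<Rightarrow> tm \<Rightarrow> tm \<Rightarrow> fm" where
  "affine_fm 0 0 q x r = (if q = 0 then Eq r Min else false_fm)"
| "affine_fm 0 (Suc d) q x r = (let z = Suc (var_index x + var_index r) in Ex z
     (Disj (Conj (affine_fm 0 d q x (Var z)) (succ_fm (Var z) r))
       (if q = 0 then false_fm
        else Conj (affine_fm 0 d (q - 1) x (Var z)) (Conj (Eq (Var z) Max) (Eq r Min)))))"
| "affine_fm (Suc c) d q x r = (let z = Suc (var_index x + var_index r) in Ex z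
     (Disj (Conj (affine_fm c d q x (Var z)) (Plus (Var z) x r))
       (if q = 0 then false_fm
        else Conj (affine_fm c d (q - 1) x (Var z)) (add_wrap_fm (Var z) x r))))"

lemma sat_affine_fm:
  assumes "\<forall>y. I y < length w" "w \<noteq> []"
  shows "sat w I J (affine_fm c d q x r) \<longleftrightarrow> c * tval w I x + d = q * length w + tval w I r"
  using assms
proof (induction c d q x r arbitrary: I rule: affine_fm.induct)
  case (1 q x r)
  then show ?case by (simp add: false_fm_def)
next
  case (2 d q x r)
  let ?z = "Suc (var_index x + var_index r)" and ?n = "length w"
  have fresh: "?z \<notin> tfv x" "?z \<notin> tfv r" by (auto intro!: var_index_less_fresh)
  have r: "tval w I r < ?n" using tval_less_length "2.prems" .
  have "sat w I J (affine_fm 0 (Suc d) q x r) \<longleftrightarrow>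
      (\<exists>z<?n. (d = q * ?n + z \<and> z + 1 = tval w I r) \<or>
              (0 < q \<and> d = (q - 1) * ?n + z \<and> z + 1 = tval w I r + ?n))"
    using "2" r
    by (auto simp: Let_def false_fm_def sat_succ_fm bounded_fun_upd tval_upd_fresh fresh)
  also have "\<dots> \<longleftrightarrow> d + 1 = q * ?n + tval w I r"
    using r "2.prems" by (intro add_with_carry_iff) auto
  finally show ?case by simp
next
  case (3 c d q x r)
  let ?z = "Suc (var_index x + var_index r)" and ?n = "length w"
  have fresh: "?z \<notin> tfv x" "?z \<notin> tfv r" by (auto intro!: var_index_less_fresh)
  have r: "tval w I r < ?n" and x: "tval w I x < ?n" using tval_less_length "3.prems" by blast+
  have "sat w I J (affine_fm (Suc c) d q x r) \<longleftrightarrow>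
      (\<exists>z<?n. (c * tval w I x + d = q * ?n + z \<and> z + tval w I x = tval w I r) \<or>
              (0 < q \<and> c * tval w I x + d = (q - 1) * ?n + z \<and> z + tval w I x = tval w I r + ?n))"
    using "3"
    by (auto simp: Let_def false_fm_def sat_add_wrap_fm bounded_fun_upd tval_upd_fresh fresh)
  also have "\<dots> \<longleftrightarrow> c * tval w I x + d + tval w I x = q * ?n + tval w I r"
    using r x by (intro add_with_carry_iff) auto
  finally show ?case by (simp add: algebra_simps)
qed

lemma fsv_affine_fm: "fsv (affine_fm c d q x r) = {}"
  by (induction c d q x r rule: affine_fm.induct)
    (auto simp: Let_def false_fm_def succ_fm_def add_wrap_fm_def)

lemma fv_affine_fm: "fv (affine_fm c d q x r) \<subseteq> tfv x \<union> tfv r"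
proof (induction c d q x r rule: affine_fm.induct)
  case (2 d q x r)
  have "Suc (var_index x + var_index r) \<notin> tfv x \<union> tfv r" by (auto intro!: var_index_less_fresh)
  with 2 show ?case by (cases x; cases r) (auto simp: Let_def false_fm_def succ_fm_def)
next
  case (3 c d q x r)
  have "Suc (var_index x + var_index r) \<notin> tfv x \<union> tfv r" by (auto intro!: var_index_less_fresh)
  with 3 show ?case
    by (cases x; cases r) (auto simp: Let_def false_fm_def succ_fm_def add_wrap_fm_def)
qed (simp add: false_fm_def)

lemma is_FO_affine_fm: "is_FO s (affine_fm c d q x r)"
  by (induction c d q x r rule: affine_fm.induct)
    (auto simp: Let_def false_fm_def succ_fm_def add_wrap_fm_def)

definition disj_list :: "fm list \<Rightarrow> fm" where
  "disj_list \<phi>s = foldr Disj \<phi>s false_fm"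

lemma sat_disj_list: "sat w I J (disj_list \<phi>s) \<longleftrightarrow> (\<exists>\<phi>\<in>set \<phi>s. sat w I J \<phi>)"
  by (induction \<phi>s) (auto simp: disj_list_def false_fm_def)

lemma fv_disj_list: "fv (disj_list \<phi>s) = (\<Union>\<phi>\<in>set \<phi>s. fv \<phi>)"
  by (induction \<phi>s) (auto simp: disj_list_def false_fm_def)

lemma fsv_disj_list: "fsv (disj_list \<phi>s) = (\<Union>\<phi>\<in>set \<phi>s. fsv \<phi>)"
  by (induction \<phi>s) (auto simp: disj_list_def false_fm_def)

lemma is_FO_disj_list: "\<forall>\<phi>\<in>set \<phi>s. is_FO s \<phi> \<Longrightarrow> is_FO s (disj_list \<phi>s)"
  by (induction \<phi>s) (auto simp: disj_list_def false_fm_def)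

fun code_pos :: "qkind \<Rightarrow> nat \<Rightarrow> nat \<Rightarrow> nat \<Rightarrow> nat \<Rightarrow> nat" where
  "code_pos Interleaved n k j t = j * k + t"
| "code_pos Concatenated n k j t = t * n + j"

lemma asg_code_pos: "asg q n k i t = {j. j < n \<and> codebit (n * k) i (code_pos q n k j t)}"
  by (cases q) simp_all

lemma code_pos_less: "j < n \<Longrightarrow> t < k \<Longrightarrow> code_pos q n k j t < n * k"
proof (cases q)
  case Interleaved
  assume "j < n" "t < k"
  then have "j * k + t < (j + 1) * k" by simp
  also have "\<dots> \<le> n * k" using \<open>j < n\<close> by (intro mult_le_mono1) simp
  finally show ?thesis using Interleaved by simp
next
  case Concatenated
  assume "j < n" "t < k"
  then have "t * n + j < (t + 1) * n" by simp
  also have "\<dots> \<le> k * n" using \<open>t < k\<close> by (intro mult_le_mono1) simp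
  finally show ?thesis using Concatenated by (simp add: mult.commute)
qed

lemma code_pos_surj: "p < n * k \<Longrightarrow> \<exists>j<n. \<exists>t<k. code_pos q n k j t = p"
proof (cases q)
  case Interleaved
  assume "p < n * k"
  then have "0 < k" by (cases k) auto
  with \<open>p < n * k\<close> have "p div k < n" "p mod k < k"
    by (auto simp: less_mult_imp_div_less mult.commute)
  then show ?thesis using Interleaved by (metis code_pos.simps(1) div_mult_mod_eq)
next
  case Concatenated
  assume "p < n * k"
  then have "0 < n" by (cases n) auto
  with \<open>p < n * k\<close> have "p mod n < n" "p div n < k"
    by (auto simp: less_mult_imp_div_less mult.commute)
  then show ?thesis using Concatenated by (metis code_pos.simps(2) div_mult_mod_eq)
qed

fun flip_kind :: "qkind \<Rightarrow> qkind" where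
  "flip_kind Interleaved = Concatenated"
| "flip_kind Concatenated = Interleaved"

fun code_pos_eq_fm :: "qkind \<Rightarrow> nat \<Rightarrow> nat \<Rightarrow> nat \<Rightarrow> tm \<Rightarrow> tm \<Rightarrow> fm" where
  "code_pos_eq_fm Interleaved k t t' u y = affine_fm k t t' u y"
| "code_pos_eq_fm Concatenated k t t' u y = affine_fm k t' t y u"

lemma sat_code_pos_eq_fm:
  assumes "\<forall>x. I x < length w" "w \<noteq> []"
  shows "sat w I J (code_pos_eq_fm q k t t' u y) \<longleftrightarrow>
    code_pos q (length w) k (tval w I u) t = code_pos (flip_kind q) (length w) k (tval w I y) t'"
  using assms by (cases q) (auto simp: sat_affine_fm mult.commute)

text \<open>The bit recording \<open>u \<in> X_t\<close> in the order of kind \<open>q\<close>, read off the sets \<open>Ys\<close> assigned in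
  the order of the other kind.\<close>
definition code_bit_fm :: "qkind \<Rightarrow> nat list \<Rightarrow> nat \<Rightarrow> tm \<Rightarrow> fm" where
  "code_bit_fm q Ys t u = (let y = Suc (var_index u) in
     disj_list (map (\<lambda>t'. Ex y (Conj (code_pos_eq_fm q (length Ys) t t' u (Var y))
       (SOAtom (Ys ! t') (Var y)))) [0..<length Ys]))"

lemma sat_code_bit_fm:
  assumes I: "\<forall>x. I x < length w" and w: "w \<noteq> []" and t: "t < length Ys"
    and J: "\<forall>t'<length Ys. J (Ys ! t') = asg (flip_kind q) (length w) (length Ys) i t'"
  shows "sat w I J (code_bit_fm q Ys t u) \<longleftrightarrow> tval w I u \<in> asg q (length w) (length Ys) i t"
proof -
  let ?k = "length Ys" and ?n = "length w" and ?y = "Suc (var_index u)"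
  let ?p = "code_pos q ?n ?k (tval w I u) t" and ?bit = "codebit (?n * ?k) i"
  have fresh: "?y \<notin> tfv u" by (auto intro!: var_index_less_fresh)
  have u: "tval w I u < ?n" using tval_less_length I w .
  have "sat w (I(?y := a)) J (code_pos_eq_fm q ?k t t' u (Var ?y)) \<longleftrightarrow>
      ?p = code_pos (flip_kind q) ?n ?k a t'" if "a < ?n" for a t'
    using sat_code_pos_eq_fm[of "I(?y := a)" w J q ?k t t' u "Var ?y"] I w that
    by (simp add: tval_upd_fresh fresh)
  then have "sat w I J (code_bit_fm q Ys t u) \<longleftrightarrow>
      (\<exists>t'<?k. \<exists>a<?n. ?p = code_pos (flip_kind q) ?n ?k a t' \<and> a \<in> J (Ys ! t'))"
    by (simp add: code_bit_fm_def sat_disj_list atLeast0LessThan Bex_def cong: conj_cong)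
  moreover have "a \<in> J (Ys ! t') \<longleftrightarrow> ?bit (code_pos (flip_kind q) ?n ?k a t')"
    if "t' < ?k" "a < ?n" for t' a
    using J that by (simp add: asg_code_pos)
  ultimately have "sat w I J (code_bit_fm q Ys t u) \<longleftrightarrow>
      (\<exists>t'<?k. \<exists>a<?n. ?p = code_pos (flip_kind q) ?n ?k a t' \<and> ?bit ?p)"
    by (simp cong: conj_cong)
  also have "\<dots> \<longleftrightarrow> ?bit ?p"
  proof
    assume "?bit ?p"
    obtain a t' where "a < ?n" "t' < ?k" "code_pos (flip_kind q) ?n ?k a t' = ?p"
      using code_pos_surj[OF code_pos_less[OF u t]] by blast
    with \<open>?bit ?p\<close> show "\<exists>t'<?k. \<exists>a<?n. ?p = code_pos (flip_kind q) ?n ?k a t' \<and> ?bit ?p"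
      by metis
  qed blast
  also have "\<dots> \<longleftrightarrow> tval w I u \<in> asg q ?n ?k i t"
    using u by (simp add: asg_code_pos)
  finally show ?thesis .
qed

lemma fsv_code_bit_fm: "fsv (code_bit_fm q Ys t u) \<subseteq> set Ys"
  by (cases q) (auto simp: code_bit_fm_def fsv_disj_list fsv_affine_fm)

lemma fv_code_bit_fm: "fv (code_bit_fm q Ys t u) \<subseteq> tfv u"
proof -
  have "Suc (var_index u) \<notin> tfv u" by (auto intro!: var_index_less_fresh)
  then show ?thesis using fv_affine_fm
    by (cases q) (fastforce simp: code_bit_fm_def fv_disj_list)+
qed

lemma is_FO_code_bit_fm: "is_FO s (code_bit_fm q Ys t u)"
  by (cases q) (auto intro!: is_FO_disj_list simp: code_bit_fm_def is_FO_affine_fm)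

fun subst :: "(nat \<Rightarrow> (tm \<Rightarrow> fm) option) \<Rightarrow> fm \<Rightarrow> fm" where
  "subst \<sigma> (SOAtom X t) = (case \<sigma> X of None \<Rightarrow> SOAtom X t | Some g \<Rightarrow> g t)"
| "subst \<sigma> (Neg \<phi>) = Neg (subst \<sigma> \<phi>)"
| "subst \<sigma> (Conj \<phi> \<psi>) = Conj (subst \<sigma> \<phi>) (subst \<sigma> \<psi>)"
| "subst \<sigma> (Disj \<phi> \<psi>) = Disj (subst \<sigma> \<phi>) (subst \<sigma> \<psi>)"
| "subst \<sigma> (Ex x \<phi>) = Ex x (subst \<sigma> \<phi>)"
| "subst \<sigma> (All x \<phi>) = All x (subst \<sigma> \<phi>)"
| "subst \<sigma> (ExS X \<phi>) = ExS X (subst (\<sigma>(X := None)) \<phi>)"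
| "subst \<sigma> (AllS X \<phi>) = AllS X (subst (\<sigma>(X := None)) \<phi>)"
| "subst \<sigma> (LQ q m L Xs \<phi>s) = LQ q m L Xs (map (subst (\<sigma> |` (- set Xs))) \<phi>s)"
| "subst \<sigma> \<phi> = \<phi>"

text \<open>Every set variable occurring in \<open>\<phi>\<close>, free or bound, is at most \<open>so_bound \<phi>\<close>, so larger
  ones are fresh.\<close>
fun so_bound :: "fm \<Rightarrow> nat" where
  "so_bound (SOAtom X t) = X"
| "so_bound (Neg \<phi>) = so_bound \<phi>"
| "so_bound (Conj \<phi> \<psi>) = so_bound \<phi> + so_bound \<psi>"
| "so_bound (Disj \<phi> \<psi>) = so_bound \<phi> + so_bound \<psi>"
| "so_bound (Ex x \<phi>) = so_bound \<phi>"
| "so_bound (All x \<phi>) = so_bound \<phi>"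
| "so_bound (ExS X \<phi>) = X + so_bound \<phi>"
| "so_bound (AllS X \<phi>) = X + so_bound \<phi>"
| "so_bound (LQ q m L Xs \<phi>s) = sum_list Xs + sum_list (map so_bound \<phi>s)"
| "so_bound \<phi> = 0"

text \<open>\<open>\<sigma>\<close> simulates \<open>J'\<close> over \<open>J\<close>: a substituted atom \<open>X(u)\<close> holds under \<open>J\<close> iff \<open>u \<in> J' X\<close>,
  using only the set variables in \<open>R\<close>; outside \<open>R\<close> the other variables agree.\<close>
definition realizes :: "nat list \<Rightarrow> nat set \<Rightarrow> (nat \<Rightarrow> (tm \<Rightarrow> fm) option) \<Rightarrow>
    (nat \<Rightarrow> nat set) \<Rightarrow> (nat \<Rightarrow> nat set) \<Rightarrow> bool" where
  "realizes w R \<sigma> J J' \<longleftrightarrow> (\<forall>X. \<sigma> X = None \<longrightarrow> X \<notin> R \<longrightarrow> J' X = J X) \<and>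
     (\<forall>X g. \<sigma> X = Some g \<longrightarrow> (\<forall>u. fsv (g u) \<subseteq> R) \<and>
        (\<forall>I u. (\<forall>x. I x < length w) \<longrightarrow> (sat w I J (g u) \<longleftrightarrow> tval w I u \<in> J' X)))"

lemma realizes_upd_list:
  assumes "realizes w R \<sigma> J J'" "set Xs \<inter> R = {}" "length As = length Xs"
  shows "realizes w R (\<sigma> |` (- set Xs)) (upd_list J Xs As) (upd_list J' Xs As)"
  unfolding realizes_def
proof (intro conjI allI impI)
  fix X assume "(\<sigma> |` (- set Xs)) X = None" "X \<notin> R"
  then show "upd_list J' Xs As X = upd_list J Xs As X"
    using assms upd_list_agree[OF _ assms(3)]
    by (cases "X \<in> set Xs") (auto simp: realizes_def upd_list_notin)
next
  fix X g u assume "(\<sigma> |` (- set Xs)) X = Some g"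
  then have "\<sigma> X = Some g" by (auto simp: restrict_map_def split: if_splits)
  then show "fsv (g u) \<subseteq> R" using assms(1) by (simp add: realizes_def)
next
  fix X g u and I :: "nat \<Rightarrow> nat" assume "(\<sigma> |` (- set Xs)) X = Some g" "\<forall>x. I x < length w"
  then have X: "X \<notin> set Xs" "\<sigma> X = Some g" by (auto simp: restrict_map_def split: if_splits)
  have "fsv (g u) \<subseteq> R" using X assms(1) by (simp add: realizes_def)
  then have "sat w I (upd_list J Xs As) (g u) = sat w I J (g u)"
    using assms(2) by (intro sat_fsv_cong ballI upd_list_notin) auto
  then show "sat w I (upd_list J Xs As) (g u) = (tval w I u \<in> upd_list J' Xs As X)"
    using X assms(1) \<open>\<forall>x. I x < length w\<close> by (simp add: realizes_def upd_list_notin)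
qed

lemma realizes_upd:
  "realizes w R \<sigma> J J' \<Longrightarrow> X \<notin> R \<Longrightarrow> realizes w R (\<sigma>(X := None)) (J(X := A)) (J'(X := A))"
  using realizes_upd_list[of w R \<sigma> J J' "[X]" "[A]"] by (simp add: restrict_complement_singleton_eq)

lemma sat_subst:
  assumes "realizes w R \<sigma> J J'" "\<forall>Y\<in>R. so_bound \<psi> < Y" "\<forall>x. I x < length w"
  shows "sat w I J (subst \<sigma> \<psi>) = sat w I J' \<psi>"
  using assms
proof (induction \<psi> arbitrary: I J J' \<sigma>)
  case (SOAtom X t)
  then show ?case by (cases "\<sigma> X") (auto simp: realizes_def)
next
  case (Conj \<phi> \<psi>)
  then have "\<forall>Y\<in>R. so_bound \<phi> < Y" "\<forall>Y\<in>R. so_bound \<psi> < Y" by fastforce+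
  then show ?case using Conj.IH Conj.prems(1,3) by simp
next
  case (Disj \<phi> \<psi>)
  then have "\<forall>Y\<in>R. so_bound \<phi> < Y" "\<forall>Y\<in>R. so_bound \<psi> < Y" by fastforce+
  then show ?case using Disj.IH Disj.prems(1,3) by simp
next
  case (Ex x \<phi>)
  have "sat w (I(x := a)) J (subst \<sigma> \<phi>) = sat w (I(x := a)) J' \<phi>" if "a < length w" for a
    using Ex.prems that by (intro Ex.IH) auto
  then show ?case by (simp cong: conj_cong)
next
  case (All x \<phi>)
  have "sat w (I(x := a)) J (subst \<sigma> \<phi>) = sat w (I(x := a)) J' \<phi>" if "a < length w" for a
    using All.prems that by (intro All.IH) auto
  then show ?case by (simp cong: imp_cong)
next
  case (ExS X \<phi>)
  then have realizes: "realizes w R (\<sigma>(X := None)) (J(X := A)) (J'(X := A))" for A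
    by (intro realizes_upd) force+
  have "\<forall>Y\<in>R. so_bound \<phi> < Y" using ExS.prems(2) by force
  then have "sat w I (J(X := A)) (subst (\<sigma>(X := None)) \<phi>) = sat w I (J'(X := A)) \<phi>" for A
    using ExS.IH[OF realizes] ExS.prems(3) by blast
  then show ?case by simp
next
  case (AllS X \<phi>)
  then have realizes: "realizes w R (\<sigma>(X := None)) (J(X := A)) (J'(X := A))" for A
    by (intro realizes_upd) force+
  have "\<forall>Y\<in>R. so_bound \<phi> < Y" using AllS.prems(2) by force
  then have "sat w I (J(X := A)) (subst (\<sigma>(X := None)) \<phi>) = sat w I (J'(X := A)) \<phi>" for A
    using AllS.IH[OF realizes] AllS.prems(3) by blast
  then show ?case by simp
next
  case (LQ q m L Xs \<phi>s)
  then have "set Xs \<inter> R = {}" using member_le_sum_list[of _ Xs] by fastforce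
  moreover have "\<forall>Y\<in>R. so_bound \<phi> < Y" if "\<phi> \<in> set \<phi>s" for \<phi>
    using LQ.prems(2) member_le_sum_list[of "so_bound \<phi>" "map so_bound \<phi>s"] that by fastforce
  ultimately show ?case using LQ by (simp add: LQ.IH[OF _ realizes_upd_list] cong: map_cong)
qed simp_all

lemma fv_subst: "\<forall>X g. \<sigma> X = Some g \<longrightarrow> (\<forall>u. fv (g u) \<subseteq> tfv u) \<Longrightarrow> fv (subst \<sigma> \<psi>) \<subseteq> fv \<psi>"
proof (induction \<psi> arbitrary: \<sigma>)
  case (SOAtom X t)
  then show ?case by (cases "\<sigma> X") auto
next
  case (LQ q m L Xs \<phi>s)
  have "fv (subst (\<sigma> |` (- set Xs)) \<phi>) \<subseteq> fv \<phi>" if "\<phi> \<in> set \<phi>s" for \<phi>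
    using LQ that by (intro LQ.IH) (auto simp: restrict_map_def split: if_splits)
  then show ?case by auto
next
  case (Neg \<phi>)
  show ?case using Neg.IH[OF Neg.prems] by auto
next
  case (Conj \<phi> \<psi>)
  show ?case using Conj.IH[OF Conj.prems] by auto
next
  case (Disj \<phi> \<psi>)
  show ?case using Disj.IH[OF Disj.prems] by auto
next
  case (Ex x \<phi>)
  show ?case using Ex.IH[OF Ex.prems] by auto
next
  case (All x \<phi>)
  show ?case using All.IH[OF All.prems] by auto
next
  case (ExS X \<phi>)
  then show ?case by simp
next
  case (AllS X \<phi>)
  then show ?case by simp
qed simp_all

lemma fsv_subst: "\<forall>X g. \<sigma> X = Some g \<longrightarrow> (\<forall>u. fsv (g u) \<subseteq> R) \<Longrightarrow>
    fsv (subst \<sigma> \<psi>) \<subseteq> (fsv \<psi> - dom \<sigma>) \<union> R"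
proof (induction \<psi> arbitrary: \<sigma>)
  case (SOAtom X t)
  then show ?case by (cases "\<sigma> X") auto
next
  case (LQ q m L Xs \<phi>s)
  have "fsv (subst (\<sigma> |` (- set Xs)) \<phi>) \<subseteq> (fsv \<phi> - dom (\<sigma> |` (- set Xs))) \<union> R" if "\<phi> \<in> set \<phi>s" for \<phi>
    using LQ that by (intro LQ.IH) (auto simp: restrict_map_def split: if_splits)
  then show ?case by fastforce
next
  case (Neg \<phi>)
  show ?case using Neg.IH[OF Neg.prems] by auto
next
  case (Conj \<phi> \<psi>)
  show ?case using Conj.IH[OF Conj.prems] by auto
next
  case (Disj \<phi> \<psi>)
  show ?case using Disj.IH[OF Disj.prems] by auto
next
  case (Ex x \<phi>)
  show ?case using Ex.IH[OF Ex.prems] by auto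
next
  case (All x \<phi>)
  show ?case using All.IH[OF All.prems] by auto
next
  case (ExS X \<phi>)
  have "fsv (subst (\<sigma>(X := None)) \<phi>) \<subseteq> (fsv \<phi> - dom (\<sigma>(X := None))) \<union> R"
    using ExS.prems by (intro ExS.IH) auto
  then show ?case by auto
next
  case (AllS X \<phi>)
  have "fsv (subst (\<sigma>(X := None)) \<phi>) \<subseteq> (fsv \<phi> - dom (\<sigma>(X := None))) \<union> R"
    using AllS.prems by (intro AllS.IH) auto
  then show ?case by auto
qed simp_all

lemma is_FO_subst:
  "\<forall>X g. \<sigma> X = Some g \<longrightarrow> (\<forall>u. is_FO s (g u)) \<Longrightarrow> is_FO s \<psi> \<Longrightarrow> is_FO s (subst \<sigma> \<psi>)"
proof (induction \<psi> arbitrary: \<sigma>)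
  case (SOAtom X t)
  then show ?case by (cases "\<sigma> X") auto
qed auto

lemma SOMQ_subst:
  "\<forall>X g. \<sigma> X = Some g \<longrightarrow> (\<forall>u. SOMQ q s (g u)) \<Longrightarrow> SOMQ q s \<psi> \<Longrightarrow> SOMQ q s (subst \<sigma> \<psi>)"
proof (induction \<psi> arbitrary: \<sigma>)
  case (SOAtom X t)
  then show ?case by (cases "\<sigma> X") auto
next
  case (LQ q' m L Xs \<phi>s)
  have "\<forall>X g. (\<sigma> |` (- set Xs)) X = Some g \<longrightarrow> (\<forall>u. SOMQ q s (g u))"
    using LQ.prems(1) by (auto simp: restrict_map_def split: if_splits)
  with LQ show ?case by (auto simp: good_mon_quant_def)
qed simp_all

definition code_subst :: "qkind \<Rightarrow> nat list \<Rightarrow> nat list \<Rightarrow> nat \<Rightarrow> (tm \<Rightarrow> fm) option" where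
  "code_subst q Xs Ys = map_of (zip Xs (map (code_bit_fm q Ys) [0..<length Xs]))"

lemma dom_code_subst: "dom (code_subst q Xs Ys) = set Xs"
  by (simp add: code_subst_def)

lemma code_subst_SomeD:
  "code_subst q Xs Ys X = Some g \<Longrightarrow> \<exists>t<length Xs. X = Xs ! t \<and> g = code_bit_fm q Ys t"
  unfolding code_subst_def by (fastforce dest!: map_of_SomeD simp: in_set_zip)

lemma is_FO_code_subst: "code_subst q Xs Ys X = Some g \<Longrightarrow> is_FO s (g u)"
  by (auto dest!: code_subst_SomeD simp: is_FO_code_bit_fm)

definition fresh_so_vars :: "nat list \<Rightarrow> fm list \<Rightarrow> nat list" where
  "fresh_so_vars Xs \<phi>s =
     (let N = Suc (sum_list Xs + sum_list (map so_bound \<phi>s)) in [N..<N + length Xs])"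

lemma fresh_so_vars_length [simp]: "length (fresh_so_vars Xs \<phi>s) = length Xs"
  unfolding fresh_so_vars_def Let_def length_upt by simp

lemma fresh_so_vars_eq_Nil_iff [simp]: "fresh_so_vars Xs \<phi>s = [] \<longleftrightarrow> Xs = []"
  by (metis fresh_so_vars_length length_0_conv)

lemma distinct_fresh_so_vars: "distinct (fresh_so_vars Xs \<phi>s)"
  by (simp add: fresh_so_vars_def Let_def)

lemma fresh_so_vars_gt: "Y \<in> set (fresh_so_vars Xs \<phi>s) \<Longrightarrow> \<phi> \<in> set \<phi>s \<Longrightarrow> so_bound \<phi> < Y"
  using member_le_sum_list[of "so_bound \<phi>" "map so_bound \<phi>s"]
  by (auto simp: fresh_so_vars_def Let_def)

definition flip_LQ :: "qkind \<Rightarrow> nat \<Rightarrow> (nat list \<Rightarrow> bool) \<Rightarrow> nat list \<Rightarrow> fm list \<Rightarrow> fm" where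
  "flip_LQ q m L Xs \<phi>s = (let Ys = fresh_so_vars Xs \<phi>s in
     LQ (flip_kind q) m L Ys (map (subst (code_subst q Xs Ys)) \<phi>s))"

lemma realizes_code_subst:
  assumes "distinct Xs" "distinct Ys" "length Ys = length Xs" "w \<noteq> []"
  defines "k \<equiv> length Xs"
  shows "realizes w (set Ys) (code_subst q Xs Ys)
    (upd_list J Ys (map (asg (flip_kind q) (length w) k i) [0..<k]))
    (upd_list J Xs (map (asg q (length w) k i) [0..<k]))"
  unfolding realizes_def
proof (intro conjI allI impI)
  fix X assume "code_subst q Xs Ys X = None" "X \<notin> set Ys"
  moreover from this(1) have "X \<notin> set Xs" by (metis domIff dom_code_subst)
  ultimately show "upd_list J Xs (map (asg q (length w) k i) [0..<k]) X =
      upd_list J Ys (map (asg (flip_kind q) (length w) k i) [0..<k]) X"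
    by (simp add: upd_list_notin)
next
  fix X g u assume "code_subst q Xs Ys X = Some g"
  then show "fsv (g u) \<subseteq> set Ys" using code_subst_SomeD fsv_code_bit_fm by blast
next
  fix X g u and I :: "nat \<Rightarrow> nat"
  assume X: "code_subst q Xs Ys X = Some g" and I: "\<forall>x. I x < length w"
  let ?J1 = "upd_list J Ys (map (asg (flip_kind q) (length w) k i) [0..<k])"
  obtain t where t: "t < k" "X = Xs ! t" "g = code_bit_fm q Ys t"
    using code_subst_SomeD[OF X] k_def by blast
  have "\<forall>t'<length Ys. ?J1 (Ys ! t') = asg (flip_kind q) (length w) (length Ys) i t'"
    using assms(2,3) by (simp add: upd_list_nth k_def)
  from sat_code_bit_fm[OF I assms(4) _ this] t assms(3)
  have "sat w I ?J1 (g u) \<longleftrightarrow> tval w I u \<in> asg q (length w) k i t"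
    by (simp add: k_def)
  then show
    "sat w I ?J1 (g u) = (tval w I u \<in> upd_list J Xs (map (asg q (length w) k i) [0..<k]) X)"
    using t assms(1) by (simp add: upd_list_nth k_def)
qed

lemma sat_flip_LQ:
  assumes "distinct Xs" "\<forall>x. I x < length w" "w \<noteq> []"
  shows "sat w I J (flip_LQ q m L Xs \<phi>s) = sat w I J (LQ q m L Xs \<phi>s)"
proof -
  let ?Ys = "fresh_so_vars Xs \<phi>s"
  have "sat w I (upd_list J ?Ys (map (asg (flip_kind q) (length w) (length Xs) i) [0..<length Xs]))
        (subst (code_subst q Xs ?Ys) \<psi>) =
      sat w I (upd_list J Xs (map (asg q (length w) (length Xs) i) [0..<length Xs])) \<psi>"
    if "\<psi> \<in> set \<phi>s" for i \<psi>
    using realizes_code_subst[OF assms(1) distinct_fresh_so_vars _ assms(3)]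
      fresh_so_vars_gt[OF _ that] assms(2)
    by (intro sat_subst[where R = "set ?Ys"]) auto
  then show ?thesis by (simp add: flip_LQ_def Let_def cong: map_cong)
qed

lemma good_mon_quant_flip_LQ:
  "good_mon_quant m L Xs \<phi>s \<Longrightarrow> good_mon_quant m L (fresh_so_vars Xs \<psi>s) (map f \<phi>s)"
  by (simp add: good_mon_quant_def distinct_fresh_so_vars)

fun flip_fm :: "fm \<Rightarrow> fm" where
  "flip_fm (Neg \<phi>) = Neg (flip_fm \<phi>)"
| "flip_fm (Conj \<phi> \<psi>) = Conj (flip_fm \<phi>) (flip_fm \<psi>)"
| "flip_fm (Disj \<phi> \<psi>) = Disj (flip_fm \<phi>) (flip_fm \<psi>)"
| "flip_fm (Ex x \<phi>) = Ex x (flip_fm \<phi>)"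
| "flip_fm (All x \<phi>) = All x (flip_fm \<phi>)"
| "flip_fm (ExS X \<phi>) = ExS X (flip_fm \<phi>)"
| "flip_fm (AllS X \<phi>) = AllS X (flip_fm \<phi>)"
| "flip_fm (LQ q m L Xs \<phi>s) = flip_LQ q m L Xs (map flip_fm \<phi>s)"
| "flip_fm \<phi> = \<phi>"

lemma sat_flip_fm:
  "SOMQ q s \<phi> \<Longrightarrow> \<forall>x. I x < length w \<Longrightarrow> w \<noteq> [] \<Longrightarrow> sat w I J (flip_fm \<phi>) = sat w I J \<phi>"
proof (induction \<phi> arbitrary: I J)
  case (LQ q' m L Xs \<phi>s)
  then have "distinct Xs" by (simp add: good_mon_quant_def)
  then have "sat w I J (flip_fm (LQ q' m L Xs \<phi>s)) = sat w I J (LQ q' m L Xs (map flip_fm \<phi>s))"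
    using sat_flip_LQ LQ.prems(2,3) by simp
  also have "\<dots> = sat w I J (LQ q' m L Xs \<phi>s)"
    using LQ.IH LQ.prems by (simp cong: map_cong)
  finally show ?case .
next
  case (Ex x \<phi>)
  then show ?case by (simp cong: conj_cong)
next
  case (All x \<phi>)
  then show ?case by (simp cong: imp_cong)
qed auto

lemma fv_flip_fm: "fv (flip_fm \<phi>) \<subseteq> fv \<phi>"
proof (induction \<phi>)
  case (LQ q m L Xs \<phi>s)
  have "fv (subst (code_subst q Xs Ys) \<psi>) \<subseteq> fv \<psi>" for Ys \<psi>
    using code_subst_SomeD fv_code_bit_fm by (intro fv_subst) blast
  with LQ show ?case by (fastforce simp: flip_LQ_def Let_def)
qed auto

lemma fsv_flip_fm: "fsv (flip_fm \<phi>) \<subseteq> fsv \<phi>"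
proof (induction \<phi>)
  case (LQ q m L Xs \<phi>s)
  have "fsv (subst (code_subst q Xs Ys) \<psi>) \<subseteq> (fsv \<psi> - set Xs) \<union> set Ys" for Ys \<psi>
    using fsv_subst[of "code_subst q Xs Ys" "set Ys" \<psi>] code_subst_SomeD fsv_code_bit_fm
    by (metis dom_code_subst)
  with LQ show ?case by (fastforce simp: flip_LQ_def Let_def)
qed auto

lemma sentence_flip_fm: "sentence \<phi> \<Longrightarrow> sentence (flip_fm \<phi>)"
  using fv_flip_fm fsv_flip_fm unfolding sentence_def by blast

lemma is_FO_imp_SOMQ: "is_FO s \<phi> \<Longrightarrow> SOMQ q s \<phi>"
  by (induction \<phi>) auto

lemma QMonFO_imp_SOMQ: "QMonFO q s \<phi> \<Longrightarrow> SOMQ q s \<phi>"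
  by (cases \<phi>) (auto intro: is_FO_imp_SOMQ)

lemma flip_fm_is_FO: "is_FO s \<phi> \<Longrightarrow> flip_fm \<phi> = \<phi>"
  by (induction \<phi>) auto

lemma SOMQ_flip_fm: "SOMQ q s \<phi> \<Longrightarrow> SOMQ (flip_kind q) s (flip_fm \<phi>)"
proof (induction \<phi>)
  case (LQ q' m L Xs \<phi>s)
  then have "SOMQ (flip_kind q) s (subst (code_subst q' Xs Ys) (flip_fm \<psi>))"
    if "\<psi> \<in> set \<phi>s" for Ys \<psi>
    using that by (intro SOMQ_subst) (auto intro: is_FO_imp_SOMQ is_FO_code_subst)
  with LQ.prems show ?case by (auto simp: flip_LQ_def Let_def good_mon_quant_flip_LQ)
qed auto

lemma QMonFO_flip_fm: "QMonFO q s \<phi> \<Longrightarrow> QMonFO (flip_kind q) s (flip_fm \<phi>)"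
proof (cases \<phi>)
  case (LQ q' m L Xs \<phi>s)
  assume "QMonFO q s \<phi>"
  with LQ have "map flip_fm \<phi>s = \<phi>s" by (auto intro: map_idI flip_fm_is_FO)
  moreover have "is_FO s (subst (code_subst q' Xs Ys) \<psi>)" if "\<psi> \<in> set \<phi>s" for Ys \<psi>
    using \<open>QMonFO q s \<phi>\<close> LQ that by (intro is_FO_subst) (auto intro: is_FO_code_subst)
  ultimately show ?thesis
    using \<open>QMonFO q s \<phi>\<close> LQ by (auto simp: flip_LQ_def Let_def good_mon_quant_flip_LQ)
qed auto

lemma equivalent_on_flip_fm: "SOMQ q s \<phi> \<Longrightarrow> equivalent_on s \<phi> (flip_fm \<phi>)"
  unfolding equivalent_on_def models_def using sat_flip_fm[of q s \<phi> "\<lambda>_. 0"] by auto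

lemma logic_equiv_by_flip_fm:
  assumes "\<And>q s \<phi>. \<L> q s \<phi> \<Longrightarrow> \<L> (flip_kind q) s (flip_fm \<phi>)"
    and "\<And>q s \<phi>. \<L> q s \<phi> \<Longrightarrow> SOMQ q s \<phi>"
  shows "logic_equiv (\<L> Interleaved) (\<L> Concatenated)"
proof -
  have "\<L> (flip_kind q) s (flip_fm \<phi>) \<and> sentence (flip_fm \<phi>) \<and> equivalent_on s \<phi> (flip_fm \<phi>)"
    if "\<L> q s \<phi>" "sentence \<phi>" for q s \<phi>
    using that assms sentence_flip_fm equivalent_on_flip_fm by blast
  moreover have "equivalent_on s \<phi> \<psi> \<Longrightarrow> equivalent_on s \<psi> \<phi>" for s \<phi> \<psi>
    by (auto simp: equivalent_on_def)
  ultimately show ?thesis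
    unfolding logic_equiv_def by (metis flip_kind.simps)
qed

theorem theorem4p2:
  shows "logic_equiv (QMonFO Interleaved) (QMonFO Concatenated)
       \<and> logic_equiv (SOMQ Interleaved) (SOMQ Concatenated)"
  using logic_equiv_by_flip_fm[of QMonFO, OF QMonFO_flip_fm QMonFO_imp_SOMQ]
    logic_equiv_by_flip_fm[of SOMQ, OF SOMQ_flip_fm] by blast

end
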